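(* Let $X$ and $Y$ be Banach spaces and let $T\in B(X)$ and $S\in B(Y)$ be equivalent after extension. If $S$ is compact, then there exists a closed subspace of $Y$ of finite codimension that is topologically isomorphic to a closed subspace of $X$.
   Context: All Banach spaces are complex; $B(X,Y)$ denotes bounded linear operators; invertibility means bounded inverse; $X\oplus Y$ is the $\ell^2$-direct sum and $\mathrm{id}_X$ the identity. Operators $T\in B(X)$ and $S\in B(Y)$ are equivalent after extension if there exist Banach spaces $X'$, $Y'$ and invertible $E\in B(Y\oplus Y',X\oplus X')$, $F\in B(X\oplus X',Y\oplus Y')$ with $\begin{bmatrix}T&0\\0&\mathrm{id}_{X'}\end{bmatrix}=E\begin{bmatrix}S&0\\0&\mathrm{id}_{Y'}\end{bmatrix}F$. *)

theory Defs
  imports "HOL-Analysis.Analysis"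
begin

class complex_vector = real_vector +
  fixes scaleC :: "complex \<Rightarrow> 'a \<Rightarrow> 'a" (infixr "*\<^sub>C" 75)
  assumes scaleC_add_right: "a *\<^sub>C (x + y) = a *\<^sub>C x + a *\<^sub>C y"
    and scaleC_add_left: "(a + b) *\<^sub>C x = a *\<^sub>C x + b *\<^sub>C x"
    and scaleC_scaleC: "a *\<^sub>C (b *\<^sub>C x) = (a * b) *\<^sub>C x"
    and scaleC_one: "1 *\<^sub>C x = x"
    and scaleR_scaleC: "scaleR r x = complex_of_real r *\<^sub>C x"

class complex_normed_vector = complex_vector + real_normed_vector +
  assumes norm_scaleC: "norm (a *\<^sub>C x) = cmod a * norm x"

text \<open>Direct sums: the product type carries the l2-norm (norm_prod_def);
  complex scalars act componentwise.\<close>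

instantiation prod :: (complex_vector, complex_vector) complex_vector
begin
definition scaleC_prod_def: "a *\<^sub>C x = (a *\<^sub>C fst x, a *\<^sub>C snd x)"
instance
  by standard (auto simp: scaleC_prod_def scaleC_add_right scaleC_add_left
      scaleC_scaleC scaleR_scaleC complex_vector_class.scaleC_one prod_eq_iff)
end

instance prod :: (complex_normed_vector, complex_normed_vector) complex_normed_vector
proof
  fix a :: complex and x :: "'a \<times> 'b"
  have "norm (a *\<^sub>C x) = sqrt ((cmod a)\<^sup>2 * ((norm (fst x))\<^sup>2 + (norm (snd x))\<^sup>2))"
    by (simp add: norm_prod_def scaleC_prod_def norm_scaleC power_mult_distrib algebra_simps)
  also have "\<dots> = cmod a * norm x"
    by (simp add: norm_prod_def real_sqrt_mult)
  finally show "norm (a *\<^sub>C x) = cmod a * norm x" .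
qed

definition clinear :: "('a::complex_vector \<Rightarrow> 'b::complex_vector) \<Rightarrow> bool" where
  "clinear f \<longleftrightarrow> (\<forall>x y. f (x + y) = f x + f y) \<and> (\<forall>c x. f (c *\<^sub>C x) = c *\<^sub>C f x)"

definition bounded_clinear ::
  "('a::complex_normed_vector \<Rightarrow> 'b::complex_normed_vector) \<Rightarrow> bool" where
  "bounded_clinear f \<longleftrightarrow> clinear f \<and> (\<exists>K. \<forall>x. norm (f x) \<le> norm x * K)"

definition invertible_op ::
  "('a::complex_normed_vector \<Rightarrow> 'b::complex_normed_vector) \<Rightarrow> bool" where
  "invertible_op f \<longleftrightarrow> bounded_clinear f \<and>
     (\<exists>g. bounded_clinear g \<and> (\<forall>x. g (f x) = x) \<and> (\<forall>y. f (g y) = y))"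

definition compact_op ::
  "('a::complex_normed_vector \<Rightarrow> 'b::complex_normed_vector) \<Rightarrow> bool" where
  "compact_op f \<longleftrightarrow> bounded_clinear f \<and> (\<forall>B. bounded B \<longrightarrow> compact (closure (f ` B)))"

definition csubspace :: "'a::complex_vector set \<Rightarrow> bool" where
  "csubspace M \<longleftrightarrow> 0 \<in> M \<and> (\<forall>x\<in>M. \<forall>y\<in>M. x + y \<in> M) \<and> (\<forall>c. \<forall>x\<in>M. c *\<^sub>C x \<in> M)"

text \<open>Finite codimension: some finite set spans a complement modulo M, i.e. Y/M is finite-dimensional.\<close>
definition finite_codim :: "'a::complex_vector set \<Rightarrow> bool" where
  "finite_codim M \<longleftrightarrow> (\<exists>F. finite F \<and>
     (\<forall>y. \<exists>m\<in>M. \<exists>c. y = m + (\<Sum>f\<in>F. c f *\<^sub>C f)))"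

definition top_isomorphic ::
  "'a::complex_normed_vector set \<Rightarrow> 'b::complex_normed_vector set \<Rightarrow> bool" where
  "top_isomorphic M N \<longleftrightarrow> (\<exists>\<phi> \<psi>. homeomorphism M N \<phi> \<psi> \<and>
     (\<forall>x\<in>M. \<forall>y\<in>M. \<phi> (x + y) = \<phi> x + \<phi> y) \<and> (\<forall>c. \<forall>x\<in>M. \<phi> (c *\<^sub>C x) = c *\<^sub>C \<phi> x))"

end

theory Submission
  imports Defs
begin

text \<open>Write \<open>F\<^sup>-\<^sup>1(y, 0) = (J y, K y)\<close>. Evaluating
  \<open>T \<oplus> id = E (S \<oplus> id) F\<close> at \<open>F\<^sup>-\<^sup>1(y, 0)\<close> gives \<open>K y = snd (E (S y, 0))\<close>,
  so \<open>K\<close> is compact, and boundedness of \<open>F\<close> gives \<open>\<parallel>y\<parallel> \<le> C (\<parallel>J y\<parallel> + \<parallel>K y\<parallel>)\<close>.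
  A compact operator has norm at most \<open>1/(2C)\<close> on a closed subspace \<open>M\<close> of finite
  codimension: the common kernel of norming functionals (Hahn--Banach) at the points of a
  finite net of \<open>K (cball 0 1)\<close>. On \<open>M\<close> the map \<open>J\<close> is bounded below, hence a
  topological isomorphism onto the closed subspace \<open>J ` M\<close> of \<open>X\<close>.\<close>

section \<open>Real norming functionals\<close>

text \<open>Graphs of linear functionals on subspaces, dominated by the norm and norming at \<open>v\<close>;
  Zorn's lemma produces a maximal one, which is total.\<close>
definition norm_dominated_graph :: "'a::real_normed_vector \<Rightarrow> ('a \<times> real) set \<Rightarrow> bool" where
  "norm_dominated_graph v G \<longleftrightarrow>
     (\<forall>x a y b. (x, a) \<in> G \<longrightarrow> (y, b) \<in> G \<longrightarrow> (x + y, a + b) \<in> G) \<and>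
     (\<forall>x a r. (x, a) \<in> G \<longrightarrow> (r *\<^sub>R x, r * a) \<in> G) \<and>
     (\<forall>x a. (x, a) \<in> G \<longrightarrow> a \<le> norm x) \<and> (v, norm v) \<in> G"

lemma norm_dominated_graphD:
  assumes "norm_dominated_graph v G"
  shows norm_dominated_graph_add: "\<And>x a y b. (x, a) \<in> G \<Longrightarrow> (y, b) \<in> G \<Longrightarrow> (x + y, a + b) \<in> G"
    and norm_dominated_graph_scale: "\<And>x a r. (x, a) \<in> G \<Longrightarrow> (r *\<^sub>R x, r * a) \<in> G"
    and norm_dominated_graph_le_norm: "\<And>x a. (x, a) \<in> G \<Longrightarrow> a \<le> norm x"
    and norm_dominated_graph_base: "(v, norm v) \<in> G"
  using assms unfolding norm_dominated_graph_def by blast+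

lemma norm_dominated_graph_unique:
  assumes G: "norm_dominated_graph v G" and "(x, a) \<in> G" "(x, b) \<in> G"
  shows "a = b"
proof -
  have "a - b \<le> norm (x + (-1) *\<^sub>R x)"
    using norm_dominated_graph_le_norm[OF G
        norm_dominated_graph_add[OF G assms(2) norm_dominated_graph_scale[OF G assms(3), of "-1"]]] by simp
  moreover have "b - a \<le> norm (x + (-1) *\<^sub>R x)"
    using norm_dominated_graph_le_norm[OF G
        norm_dominated_graph_add[OF G assms(3) norm_dominated_graph_scale[OF G assms(2), of "-1"]]] by simp
  ultimately show ?thesis by simp
qed

lemma norm_dominated_graph_extension_value:
  assumes G: "norm_dominated_graph v G"
  obtains c where "\<And>x a. (x, a) \<in> G \<Longrightarrow> a - norm (x - z) \<le> c"
    and "\<And>x a. (x, a) \<in> G \<Longrightarrow> c \<le> norm (x + z) - a"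
proof -
  define A where "A = {a - norm (x - z) | x a. (x, a) \<in> G}"
  have "(0, 0) \<in> G" using norm_dominated_graph_scale[OF G norm_dominated_graph_base[OF G], of 0] by simp
  then have "A \<noteq> {}" unfolding A_def by blast
  have A_le: "p \<le> norm (y + z) - b" if "p \<in> A" "(y, b) \<in> G" for p y b
  proof -
    obtain x a where p: "p = a - norm (x - z)" and xa: "(x, a) \<in> G"
      using \<open>p \<in> A\<close> unfolding A_def by blast
    have "a + b \<le> norm ((x - z) + (y + z))"
      using norm_dominated_graph_le_norm[OF G norm_dominated_graph_add[OF G xa that(2)]] by simp
    also have "\<dots> \<le> norm (x - z) + norm (y + z)" by (rule norm_triangle_ineq)
    finally show ?thesis using p by simp
  qed
  have "bdd_above A" using A_le \<open>(0, 0) \<in> G\<close> by (auto simp: bdd_above_def)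
  show ?thesis
  proof (rule that[of "Sup A"])
    show "a - norm (x - z) \<le> Sup A" if "(x, a) \<in> G" for x a
      using that \<open>bdd_above A\<close> by (auto simp: A_def intro: cSup_upper)
    show "Sup A \<le> norm (x + z) - a" if "(x, a) \<in> G" for x a
      using that \<open>A \<noteq> {}\<close> A_le by (auto intro: cSup_least)
  qed
qed

text \<open>Extending by \<open>(z, c)\<close> needs \<open>a + t c \<le> \<parallel>x + t z\<parallel>\<close> for all \<open>t\<close>;
  by homogeneity it suffices to have it for \<open>t = \<plusminus>1\<close>.\<close>
lemma norm_dominated_graph_extension_le_norm:
  assumes G: "norm_dominated_graph v G"
    and lower: "\<And>x a. (x, a) \<in> G \<Longrightarrow> a - norm (x - z) \<le> c"
    and upper: "\<And>x a. (x, a) \<in> G \<Longrightarrow> c \<le> norm (x + z) - a"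
    and xa: "(x, a) \<in> G"
  shows "a + t * c \<le> norm (x + t *\<^sub>R z)"
proof (cases t "0::real" rule: linorder_cases)
  case less
  have "a / (-t) - norm ((1 / (-t)) *\<^sub>R x - z) \<le> c"
    using lower[OF norm_dominated_graph_scale[OF G xa, of "1 / (-t)"]] by simp
  also have "(1 / (-t)) *\<^sub>R x - z = (1 / (-t)) *\<^sub>R (x + t *\<^sub>R z)"
    using less by (simp add: algebra_simps)
  finally have "a / (-t) - norm (x + t *\<^sub>R z) / (-t) \<le> c"
    using less by simp
  then show ?thesis using less by (simp add: field_simps)
next
  case equal
  then show ?thesis using norm_dominated_graph_le_norm[OF G xa] by simp
next
  case greater
  have "c \<le> norm ((1 / t) *\<^sub>R x + z) - a / t"
    using upper[OF norm_dominated_graph_scale[OF G xa, of "1 / t"]] by simp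
  also have "(1 / t) *\<^sub>R x + z = (1 / t) *\<^sub>R (x + t *\<^sub>R z)"
    using greater by (simp add: algebra_simps)
  finally have "c \<le> norm (x + t *\<^sub>R z) / t - a / t"
    using greater by simp
  then show ?thesis using greater by (simp add: field_simps)
qed

lemma norm_dominated_graph_extend:
  assumes G: "norm_dominated_graph v G" and z: "\<forall>a. (z, a) \<notin> G"
  shows "\<exists>G'. norm_dominated_graph v G' \<and> G \<subset> G'"
proof -
  obtain c where lower: "\<And>x a. (x, a) \<in> G \<Longrightarrow> a - norm (x - z) \<le> c"
    and upper: "\<And>x a. (x, a) \<in> G \<Longrightarrow> c \<le> norm (x + z) - a"
    using norm_dominated_graph_extension_value[OF G] by metis
  define G' where "G' = {(x + t *\<^sub>R z, a + t * c) | x a t. (x, a) \<in> G}"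
  have G'I: "(x + t *\<^sub>R z, a + t * c) \<in> G'" if "(x, a) \<in> G" for x a t
    using that unfolding G'_def by blast
  have "norm_dominated_graph v G'"
    unfolding norm_dominated_graph_def
  proof (intro conjI allI impI)
    fix x a y b assume "(x, a) \<in> G'" "(y, b) \<in> G'"
    then obtain x1 a1 s x2 a2 t where "(x1, a1) \<in> G" "(x2, a2) \<in> G"
      and "x = x1 + s *\<^sub>R z" "a = a1 + s * c" "y = x2 + t *\<^sub>R z" "b = a2 + t * c"
      unfolding G'_def by blast
    with G'I[OF norm_dominated_graph_add[OF G], of x1 a1 x2 a2 "s + t"]
    show "(x + y, a + b) \<in> G'" by (simp add: algebra_simps)
  next
    fix x a r assume "(x, a) \<in> G'"
    then obtain x1 a1 t where "(x1, a1) \<in> G" "x = x1 + t *\<^sub>R z" "a = a1 + t * c"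
      unfolding G'_def by blast
    with G'I[OF norm_dominated_graph_scale[OF G], of x1 a1 r "r * t"]
    show "(r *\<^sub>R x, r * a) \<in> G'" by (simp add: algebra_simps)
  next
    fix x a assume "(x, a) \<in> G'"
    then show "a \<le> norm x"
      unfolding G'_def using norm_dominated_graph_extension_le_norm[OF G lower upper] by blast
  next
    show "(v, norm v) \<in> G'" using G'I[OF norm_dominated_graph_base[OF G], of 0] by simp
  qed
  moreover have "G \<subseteq> G'" using G'I[of _ _ 0] by auto
  moreover have "(z, c) \<in> G'"
    using G'I[OF norm_dominated_graph_scale[OF G norm_dominated_graph_base[OF G], of 0], of 1] by simp
  ultimately show ?thesis using z by blast
qed

lemma norm_dominated_graph_Union_chain:
  assumes "C \<in> chains {G. norm_dominated_graph v G}" "C \<noteq> {}"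
  shows "norm_dominated_graph v (\<Union>C)"
proof -
  have CG: "\<And>G. G \<in> C \<Longrightarrow> norm_dominated_graph v G"
    and chain: "\<And>G H. G \<in> C \<Longrightarrow> H \<in> C \<Longrightarrow> G \<subseteq> H \<or> H \<subseteq> G"
    using assms(1) unfolding chains_def chain_subset_def by auto
  show ?thesis
    unfolding norm_dominated_graph_def
  proof (intro conjI allI impI)
    fix x a y b assume "(x, a) \<in> \<Union>C" "(y, b) \<in> \<Union>C"
    then obtain G H where "G \<in> C" "H \<in> C" "(x, a) \<in> G" "(y, b) \<in> H" by blast
    with chain[of G H] show "(x + y, a + b) \<in> \<Union>C"
      by (metis CG UnionI norm_dominated_graph_add subsetD)
  next
    fix x a r assume "(x, a) \<in> \<Union>C"
    then show "(r *\<^sub>R x, r * a) \<in> \<Union>C" using CG norm_dominated_graph_scale by blast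
  next
    fix x a assume "(x, a) \<in> \<Union>C"
    then show "a \<le> norm x" using CG norm_dominated_graph_le_norm by blast
  next
    show "(v, norm v) \<in> \<Union>C" using assms(2) CG norm_dominated_graph_base by blast
  qed
qed

lemma norm_dominated_graph_span: "norm_dominated_graph v (range (\<lambda>r. (r *\<^sub>R v, r * norm v)))"
  unfolding norm_dominated_graph_def
proof (intro conjI allI impI)
  fix x a y b assume "(x, a) \<in> range (\<lambda>r. (r *\<^sub>R v, r * norm v))"
    "(y, b) \<in> range (\<lambda>r. (r *\<^sub>R v, r * norm v))"
  then obtain r s where "x = r *\<^sub>R v" "a = r * norm v" "y = s *\<^sub>R v" "b = s * norm v" by auto
  then show "(x + y, a + b) \<in> range (\<lambda>r. (r *\<^sub>R v, r * norm v))"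
    by (simp add: image_iff algebra_simps) (metis scaleR_add_left distrib_right)
next
  fix x a t assume "(x, a) \<in> range (\<lambda>r. (r *\<^sub>R v, r * norm v))"
  then obtain r where "x = r *\<^sub>R v" "a = r * norm v" by auto
  then show "(t *\<^sub>R x, t * a) \<in> range (\<lambda>r. (r *\<^sub>R v, r * norm v))"
    by (simp add: image_iff) (metis mult.assoc)
next
  fix x a assume "(x, a) \<in> range (\<lambda>r. (r *\<^sub>R v, r * norm v))"
  then show "a \<le> norm x" by (auto intro!: mult_right_mono)
qed (simp add: image_iff exI[of _ 1])

theorem exists_norming_functional_real:
  fixes v :: "'a::real_normed_vector"
  obtains g :: "'a \<Rightarrow> real" where "linear g" "g v = norm v" "\<And>x. g x \<le> norm x"
proof -
  have "norm_dominated_graph v (range (\<lambda>r. (r *\<^sub>R v, r * norm v)))"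
    by (rule norm_dominated_graph_span)
  then have "\<forall>C\<in>chains {G. norm_dominated_graph v G}. \<exists>U\<in>{G. norm_dominated_graph v G}. \<forall>X\<in>C. X \<subseteq> U"
    using norm_dominated_graph_Union_chain by (metis Union_upper empty_iff mem_Collect_eq)
  then obtain G where G: "norm_dominated_graph v G"
    and max: "\<And>H. norm_dominated_graph v H \<Longrightarrow> G \<subseteq> H \<Longrightarrow> H = G"
    using Zorn_Lemma2 by (metis mem_Collect_eq)
  have total: "\<exists>a. (x, a) \<in> G" for x
    using norm_dominated_graph_extend[OF G] max by blast
  define g where "g x = (THE a. (x, a) \<in> G)" for x
  have g_eq: "g x = a" if "(x, a) \<in> G" for x a
    unfolding g_def using that norm_dominated_graph_unique[OF G] by blast
  have gG: "(x, g x) \<in> G" for x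
    using total g_eq by blast
  show ?thesis
  proof
    show "linear g"
      by (rule linearI) (simp_all add: g_eq norm_dominated_graph_add[OF G gG gG]
          norm_dominated_graph_scale[OF G gG])
    show "g v = norm v" by (rule g_eq[OF norm_dominated_graph_base[OF G]])
    show "g x \<le> norm x" for x by (rule norm_dominated_graph_le_norm[OF G gG])
  qed
qed

instantiation complex :: complex_normed_vector
begin
definition scaleC_complex_def: "a *\<^sub>C z = a * (z::complex)"
instance
  by standard (simp_all add: scaleC_complex_def algebra_simps scaleR_conv_of_real norm_mult)
end

lemma clinear_imp_linear: "clinear f \<Longrightarrow> linear f"
  unfolding clinear_def by (rule linearI) (auto simp: scaleR_scaleC)

lemma bounded_clinear_imp_bounded_linear: "bounded_clinear f \<Longrightarrow> bounded_linear f"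
  unfolding bounded_clinear_def clinear_def
  by (auto intro!: bounded_linear_intro simp: scaleR_scaleC)

lemma bounded_clinearI:
  assumes "\<And>x y. f (x + y) = f x + f y" "\<And>c x. f (c *\<^sub>C x) = c *\<^sub>C f x"
    and "\<And>x. norm (f x) \<le> norm x * K"
  shows "bounded_clinear f"
  unfolding bounded_clinear_def clinear_def using assms by blast

lemma bounded_clinear_compose:
  assumes f: "bounded_clinear f" and g: "bounded_clinear g"
  shows "bounded_clinear (\<lambda>x. f (g x))"
proof -
  obtain Kf where Kf: "\<And>x. norm (f x) \<le> norm x * Kf" "Kf > 0"
    using bounded_linear.pos_bounded[OF bounded_clinear_imp_bounded_linear[OF f]] by blast
  obtain Kg where Kg: "\<And>x. norm (g x) \<le> norm x * Kg"
    using g unfolding bounded_clinear_def by blast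
  have "norm (f (g x)) \<le> norm x * (Kg * Kf)" for x
    using order.trans[OF Kf(1) mult_right_mono[OF Kg less_imp_le[OF Kf(2)]]] by (simp add: mult.assoc)
  with f g show ?thesis
    unfolding bounded_clinear_def clinear_def by auto
qed

lemma scaleC_zero_left [simp]: "(0::complex) *\<^sub>C (x::'a::complex_vector) = 0"
  using scaleR_scaleC[of 0 x] by simp

lemma scaleC_zero_right [simp]: "a *\<^sub>C (0::'a::complex_vector) = 0"
  using scaleC_add_right[of a "0::'a" 0] by simp

lemma bounded_clinear_fst: "bounded_clinear fst"
  by (rule bounded_clinearI[of _ 1]) (auto simp: scaleC_prod_def intro: norm_fst_le)

lemma bounded_clinear_snd: "bounded_clinear snd"
  by (rule bounded_clinearI[of _ 1]) (auto simp: scaleC_prod_def intro: norm_snd_le)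

lemma bounded_clinear_Pair_zero: "bounded_clinear (\<lambda>x. (x, 0))"
  by (rule bounded_clinearI[of _ 1])
    (simp_all add: scaleC_prod_def norm_Pair)

lemma clinear_zero: "clinear f \<Longrightarrow> f 0 = 0"
  using clinear_imp_linear linear_0 by blast

lemma scaleC_Re_Im: "a *\<^sub>C x = Re a *\<^sub>R x + Im a *\<^sub>R (\<i> *\<^sub>C x)"
proof -
  have "a = complex_of_real (Re a) + complex_of_real (Im a) * \<i>"
    by (simp add: complex_eq_iff)
  then show ?thesis
    by (metis scaleC_add_left scaleC_scaleC scaleR_scaleC)
qed

theorem exists_norming_functional:
  fixes v :: "'a::complex_normed_vector"
  obtains \<phi> :: "'a \<Rightarrow> complex"
  where "bounded_clinear \<phi>" "Re (\<phi> v) = norm v" "\<And>x. Re (\<phi> x) \<le> norm x"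
proof -
  obtain g :: "'a \<Rightarrow> real" where g: "linear g" "g v = norm v" "\<And>x. g x \<le> norm x"
    using exists_norming_functional_real[of v] by blast
  have g_abs: "\<bar>g x\<bar> \<le> norm x" for x
    using g(3)[of x] g(3)[of "- x"] linear_neg[OF g(1), of x] by simp
  have g_scaleC: "g (c *\<^sub>C x) = Re c * g x + Im c * g (\<i> *\<^sub>C x)" for c x
    by (subst scaleC_Re_Im) (simp add: linear_add[OF g(1)] linear_scale[OF g(1)])
  define \<phi> where "\<phi> x = complex_of_real (g x) - \<i> * complex_of_real (g (\<i> *\<^sub>C x))" for x
  show ?thesis
  proof
    show "bounded_clinear \<phi>"
    proof (rule bounded_clinearI[of _ 2])
      show "\<phi> (x + y) = \<phi> x + \<phi> y" for x y
        by (simp add: \<phi>_def scaleC_add_right linear_add[OF g(1)] algebra_simps)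
      show "\<phi> (c *\<^sub>C x) = c *\<^sub>C \<phi> x" for c x
        using g_scaleC[of "\<i> * c" x]
        by (simp add: \<phi>_def g_scaleC[of c x] scaleC_scaleC scaleC_complex_def complex_eq_iff algebra_simps)
      show "norm (\<phi> x) \<le> norm x * 2" for x
      proof -
        have "norm (\<phi> x) \<le> \<bar>g x\<bar> + \<bar>g (\<i> *\<^sub>C x)\<bar>"
          unfolding \<phi>_def by (rule order.trans[OF norm_triangle_ineq4]) (simp add: norm_mult)
        also have "\<dots> \<le> norm x + norm (\<i> *\<^sub>C x)" by (intro add_mono g_abs)
        finally show ?thesis by (simp add: norm_scaleC)
      qed
    qed
    show "Re (\<phi> v) = norm v" by (simp add: \<phi>_def g(2))
    show "Re (\<phi> x) \<le> norm x" for x by (simp add: \<phi>_def g(3))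
  qed
qed

section \<open>Kernels of finitely many functionals\<close>

lemma csubspace_kernel_Int:
  fixes \<psi> :: "'a::complex_vector \<Rightarrow> complex"
  assumes "csubspace M" "clinear \<psi>"
  shows "csubspace (M \<inter> {y. \<psi> y = 0})"
  using assms clinear_zero[OF assms(2)] unfolding csubspace_def clinear_def by auto

lemma sum_scaleC_insert:
  fixes F :: "'a::complex_vector set"
  assumes F: "finite F"
  shows "\<exists>c'. (\<Sum>f\<in>insert u F. c' f *\<^sub>C f) = a *\<^sub>C u + (\<Sum>f\<in>F. c f *\<^sub>C f)"
proof
  define c' where "c' f = (if f = u then a else 0) + (if f \<in> F then c f else 0)" for f
  have "(\<Sum>f\<in>insert u F. (if f = u then a else 0) *\<^sub>C f)
      = (\<Sum>f\<in>insert u F. if f = u then a *\<^sub>C f else 0)"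
    by (rule sum.cong) auto
  then have "(\<Sum>f\<in>insert u F. (if f = u then a else 0) *\<^sub>C f) = a *\<^sub>C u"
    using F by simp
  moreover have "(\<Sum>f\<in>insert u F. (if f \<in> F then c f else 0) *\<^sub>C f) = (\<Sum>f\<in>F. c f *\<^sub>C f)"
    using F by (intro sum.mono_neutral_cong_right) auto
  ultimately show "(\<Sum>f\<in>insert u F. c' f *\<^sub>C f) = a *\<^sub>C u + (\<Sum>f\<in>F. c f *\<^sub>C f)"
    unfolding c'_def scaleC_add_left sum.distrib by simp
qed

lemma finite_codim_kernel_Int:
  fixes \<psi> :: "'a::complex_vector \<Rightarrow> complex"
  assumes M: "csubspace M" "finite_codim M" and \<psi>: "clinear \<psi>"
  shows "finite_codim (M \<inter> {y. \<psi> y = 0})"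
proof (cases "\<forall>m\<in>M. \<psi> m = 0")
  case True
  then show ?thesis using M(2) by (simp add: Int_absorb2 subsetI)
next
  case False
  then obtain u0 where u0: "u0 \<in> M" "\<psi> u0 \<noteq> 0" by blast
  define u where "u = (1 / \<psi> u0) *\<^sub>C u0"
  have u: "u \<in> M" "\<psi> u = 1"
    using M(1) u0 \<psi> unfolding u_def csubspace_def clinear_def by (simp_all add: scaleC_complex_def)
  obtain F where F: "finite F" and span: "\<And>y. \<exists>m\<in>M. \<exists>c. y = m + (\<Sum>f\<in>F. c f *\<^sub>C f)"
    using M(2) unfolding finite_codim_def by blast
  show ?thesis
    unfolding finite_codim_def
  proof (intro exI[of _ "insert u F"] conjI allI)
    fix y
    obtain m c where m: "m \<in> M" and y: "y = m + (\<Sum>f\<in>F. c f *\<^sub>C f)"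
      using span by blast
    define m' where "m' = m + (- \<psi> m) *\<^sub>C u"
    have m': "m' \<in> M" "\<psi> m' = 0"
      using M(1) m u \<psi> unfolding m'_def csubspace_def clinear_def by (simp_all add: scaleC_complex_def)
    obtain c' where "(\<Sum>f\<in>insert u F. c' f *\<^sub>C f) = \<psi> m *\<^sub>C u + (\<Sum>f\<in>F. c f *\<^sub>C f)"
      using sum_scaleC_insert[OF F] by blast
    moreover have "m = m' + \<psi> m *\<^sub>C u"
      unfolding m'_def by (simp add: add.assoc scaleC_add_left[symmetric])
    ultimately have "y = m' + (\<Sum>f\<in>insert u F. c' f *\<^sub>C f)"
      using y by (simp add: algebra_simps)
    then show "\<exists>m\<in>M \<inter> {y. \<psi> y = 0}. \<exists>c. y = m + (\<Sum>f\<in>insert u F. c f *\<^sub>C f)"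
      using m' by blast
  qed (use F in simp)
qed

lemma csubspace_finite_codim_kernels:
  fixes \<psi> :: "'w \<Rightarrow> 'a::complex_vector \<Rightarrow> complex"
  assumes "finite W" "\<And>w. w \<in> W \<Longrightarrow> clinear (\<psi> w)"
  shows "csubspace {y. \<forall>w\<in>W. \<psi> w y = 0} \<and> finite_codim {y. \<forall>w\<in>W. \<psi> w y = 0}"
  using assms
proof (induction W rule: finite_induct)
  case empty
  show ?case
    unfolding csubspace_def finite_codim_def by (auto intro!: exI[of _ "{}"])
next
  case (insert w W)
  have eq: "{y. \<forall>w'\<in>insert w W. \<psi> w' y = 0} = {y. \<forall>w\<in>W. \<psi> w y = 0} \<inter> {y. \<psi> w y = 0}"
    by auto
  have "csubspace {y. \<forall>w\<in>W. \<psi> w y = 0}" "finite_codim {y. \<forall>w\<in>W. \<psi> w y = 0}"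
    and "clinear (\<psi> w)"
    using insert by simp_all
  then show ?case
    unfolding eq using csubspace_kernel_Int finite_codim_kernel_Int by blast
qed

lemma csubspace_scaleR: "csubspace M \<Longrightarrow> y \<in> M \<Longrightarrow> r *\<^sub>R y \<in> M"
  unfolding csubspace_def by (simp add: scaleR_scaleC)

lemma csubspace_image:
  assumes "clinear J" "csubspace M"
  shows "csubspace (J ` M)"
  unfolding csubspace_def
proof (intro conjI ballI allI)
  show "0 \<in> J ` M"
    using assms clinear_zero[OF assms(1)] unfolding csubspace_def by (metis image_eqI)
  show "x + y \<in> J ` M" if "x \<in> J ` M" "y \<in> J ` M" for x y
    using that assms unfolding csubspace_def clinear_def by (auto intro!: image_eqI[of _ J "_ + _"])
  show "c *\<^sub>C x \<in> J ` M" if "x \<in> J ` M" for c x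
    using that assms unfolding csubspace_def clinear_def by (auto intro!: image_eqI[of _ J "c *\<^sub>C _"])
qed

section \<open>Compact operators on subspaces of finite codimension\<close>

lemma compact_op_compose_left:
  fixes S :: "'a::complex_normed_vector \<Rightarrow> 'b::complex_normed_vector"
    and L :: "'b \<Rightarrow> 'c::complex_normed_vector"
  assumes L: "bounded_clinear L" and S: "compact_op S"
  shows "compact_op (\<lambda>y. L (S y))"
  unfolding compact_op_def
proof (intro conjI allI impI)
  show "bounded_clinear (\<lambda>y. L (S y))"
    using bounded_clinear_compose L S unfolding compact_op_def by blast
  fix B :: "'a set" assume "bounded B"
  then have "compact (L ` closure (S ` B))"
    using S L bounded_clinear_imp_bounded_linear compact_continuous_image linear_continuous_on
    unfolding compact_op_def by blast
  moreover have "closure ((\<lambda>y. L (S y)) ` B) \<subseteq> L ` closure (S ` B)"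
    using closure_subset[of "S ` B"] compact_imp_closed[OF calculation]
    by (intro closure_minimal) auto
  ultimately show "compact (closure ((\<lambda>y. L (S y)) ` B))"
    using compact_Int_closed[of "L ` closure (S ` B)"] by (metis closed_closure inf.absorb2)
qed

lemma norm_le_twice_dist_to_kernel:
  fixes \<phi> :: "'a::complex_normed_vector \<Rightarrow> complex"
  assumes \<phi>: "clinear \<phi>" "Re (\<phi> w) = norm w" "\<And>x. Re (\<phi> x) \<le> norm x" and u: "\<phi> u = 0"
  shows "norm u \<le> 2 * norm (w - u)"
proof -
  have "norm w = Re (\<phi> (w - u))"
    using \<phi>(2) u linear_diff[OF clinear_imp_linear[OF \<phi>(1)]] by simp
  also have "\<dots> \<le> norm (w - u)" by (rule \<phi>(3))
  finally have "norm w \<le> norm (w - u)" .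
  moreover have "norm u \<le> norm w + norm (w - u)"
    using norm_triangle_ineq4[of w "w - u"] by simp
  ultimately show ?thesis by simp
qed

text \<open>Finitely many norming functionals at the points of an \<open>\<epsilon>/2\<close>-net of
  \<open>K (cball 0 1)\<close> cut out the subspace on which \<open>K\<close> has norm at most \<open>\<epsilon>\<close>.\<close>
lemma compact_op_small_on_finite_codim:
  fixes K :: "'a::complex_normed_vector \<Rightarrow> 'b::complex_normed_vector"
  assumes K: "compact_op K" and \<epsilon>: "\<epsilon> > 0"
  obtains M where "csubspace M" "closed M" "finite_codim M" "\<And>y. y \<in> M \<Longrightarrow> norm (K y) \<le> \<epsilon> * norm y"
proof -
  have K_bcl: "bounded_clinear K" and "compact (closure (K ` cball 0 1))"
    using K unfolding compact_op_def by auto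
  then obtain W where W: "finite W" "closure (K ` cball 0 1) \<subseteq> (\<Union>w\<in>W. ball w (\<epsilon> / 2))"
    using \<epsilon> unfolding compact_eq_totally_bounded by (meson half_gt_zero)
  obtain \<phi> :: "'b \<Rightarrow> 'b \<Rightarrow> complex" where \<phi>: "\<And>w. bounded_clinear (\<phi> w)"
    "\<And>w. Re (\<phi> w w) = norm w" "\<And>w x. Re (\<phi> w x) \<le> norm x"
    using exists_norming_functional by metis
  have \<psi>: "bounded_clinear (\<lambda>y. \<phi> w (K y))" for w
    by (rule bounded_clinear_compose[OF \<phi>(1) K_bcl])
  define M where "M = {y. \<forall>w\<in>W. \<phi> w (K y) = 0}"
  have M: "csubspace M" "finite_codim M"
    unfolding M_def
    using csubspace_finite_codim_kernels[OF W(1), of "\<lambda>w y. \<phi> w (K y)"] \<psi>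
    unfolding bounded_clinear_def by blast+
  have "closed M"
  proof -
    have "closed {y. \<phi> w (K y) = 0}" for w
      using linear_continuous_on[OF bounded_clinear_imp_bounded_linear[OF \<psi>]]
      by (intro closed_Collect_eq) auto
    moreover have "M = (\<Inter>w\<in>W. {y. \<phi> w (K y) = 0})" unfolding M_def by auto
    ultimately show ?thesis by auto
  qed
  have unit: "norm (K y) < \<epsilon>" if "y \<in> M" "norm y \<le> 1" for y
  proof -
    have "K y \<in> closure (K ` cball 0 1)" using that closure_subset by fastforce
    then obtain w where "w \<in> W" "norm (w - K y) < \<epsilon> / 2"
      using W(2) by (auto simp: dist_norm)
    moreover have "norm (K y) \<le> 2 * norm (w - K y)"
      using \<open>w \<in> W\<close> \<open>y \<in> M\<close> \<phi>(1)[unfolded bounded_clinear_def] \<phi>(2,3) unfolding M_def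
      by (intro norm_le_twice_dist_to_kernel[of "\<phi> w"]) auto
    ultimately show ?thesis by simp
  qed
  show ?thesis
  proof (rule that[OF M(1) \<open>closed M\<close> M(2)])
    fix y assume "y \<in> M"
    show "norm (K y) \<le> \<epsilon> * norm y"
    proof (cases "y = 0")
      case True
      then show ?thesis
        using linear_0[OF bounded_linear.linear[OF bounded_clinear_imp_bounded_linear[OF K_bcl]]] by simp
    next
      case False
      have "norm (K ((1 / norm y) *\<^sub>R y)) < \<epsilon>"
        using unit csubspace_scaleR[OF M(1) \<open>y \<in> M\<close>] False by simp
      then show ?thesis
        using False linear_scale[OF bounded_linear.linear[OF bounded_clinear_imp_bounded_linear[OF K_bcl]]]
        by (simp add: field_simps)
    qed
  qed
qed

section \<open>Operators bounded below\<close>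

lemma top_isomorphic_image_if_bounded_below:
  fixes J :: "'a::{complex_normed_vector,banach} \<Rightarrow> 'b::complex_normed_vector"
  assumes J: "bounded_clinear J" and M: "csubspace M" "closed M"
    and c: "c > 0" and below: "\<And>y. y \<in> M \<Longrightarrow> c * norm y \<le> norm (J y)"
  shows "csubspace (J ` M) \<and> closed (J ` M) \<and> top_isomorphic M (J ` M)"
proof (intro conjI)
  have J_lin: "clinear J" using J unfolding bounded_clinear_def by blast
  have J_bl: "bounded_linear J" by (rule bounded_clinear_imp_bounded_linear[OF J])
  have "subspace M"
    using M(1) unfolding csubspace_def by (auto intro!: subspaceI simp: scaleR_scaleC)
  show "csubspace (J ` M)" by (rule csubspace_image[OF J_lin M(1)])
  show "closed (J ` M)"
    using complete_isometric_image[OF c \<open>subspace M\<close> J_bl] below M(2)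
    by (simp add: complete_eq_closed complete_imp_closed)
  have inverse_lipschitz: "dist a b \<le> (1 / c) * dist (J a) (J b)" if "a \<in> M" "b \<in> M" for a b
    using below[of "a - b"] subspace_diff[OF \<open>subspace M\<close> that] c
      linear_diff[OF bounded_linear.linear[OF J_bl]]
    by (simp add: dist_norm field_simps)
  have "inj_on J M"
    using inverse_lipschitz by (intro inj_onI) force
  define G where "G = the_inv_into M J"
  have G_J: "G (J a) = a" if "a \<in> M" for a
    unfolding G_def using the_inv_into_f_f[OF \<open>inj_on J M\<close> that] .
  have "homeomorphism M (J ` M) J G"
  proof (rule homeomorphismI)
    show "continuous_on M J" by (rule linear_continuous_on[OF J_bl])
    show "continuous_on (J ` M) G"
    proof (rule lipschitz_on_continuous_on[OF lipschitz_onI])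
      show "dist (G a) (G b) \<le> (1 / c) * dist a b" if "a \<in> J ` M" "b \<in> J ` M" for a b
        using that inverse_lipschitz G_J by auto
    qed (use c in simp)
  qed (use G_J in auto)
  then show "top_isomorphic M (J ` M)"
    unfolding top_isomorphic_def using J_lin unfolding clinear_def by blast
qed

lemma finite_codim_top_isomorphic_if_bounded_below_modulo_compact:
  fixes J :: "'y::{complex_normed_vector,banach} \<Rightarrow> 'x::complex_normed_vector"
    and K :: "'y \<Rightarrow> 'z::complex_normed_vector"
  assumes J: "bounded_clinear J" and K: "compact_op K"
    and bound: "\<And>y. norm y \<le> C * (norm (J y) + norm (K y))"
  shows "\<exists>M :: 'y set. \<exists>N :: 'x set. csubspace M \<and> closed M \<and> finite_codim M \<and>
           csubspace N \<and> closed N \<and> top_isomorphic M N"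
proof -
  define C' where "C' = max C 1"
  have C': "C' \<ge> 1" unfolding C'_def by simp
  have "1 / (2 * C') > 0" using C' by simp
  then obtain M where M: "csubspace M" "closed M" "finite_codim M"
    and small: "\<And>y. y \<in> M \<Longrightarrow> norm (K y) \<le> 1 / (2 * C') * norm y"
    using compact_op_small_on_finite_codim[OF K] by blast
  have "1 / (2 * C') * norm y \<le> norm (J y)" if "y \<in> M" for y
  proof -
    have "norm y \<le> C' * (norm (J y) + norm (K y))"
      using bound[of y] by (rule order.trans) (simp add: C'_def mult_right_mono)
    also have "\<dots> \<le> C' * norm (J y) + norm y / 2"
      using mult_left_mono[OF small[OF that], of C'] C' by (simp add: distrib_left)
    finally have "norm y \<le> (2 * C') * norm (J y)" by simp
    then show ?thesis using C' by (simp add: divide_simps mult.commute)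
  qed
  then have "csubspace (J ` M) \<and> closed (J ` M) \<and> top_isomorphic M (J ` M)"
    using top_isomorphic_image_if_bounded_below[OF J M(1,2), of "1 / (2 * C')"] C' by simp
  with M show ?thesis by blast
qed

lemma norm_le_norm_right_inverse:
  assumes "bounded_clinear F" "\<And>u. F (G u) = u"
  obtains C where "C > 0" "\<And>u. norm u \<le> C * norm (G u)"
proof -
  obtain C where "C > 0" "\<And>v. norm (F v) \<le> norm v * C"
    using bounded_linear.pos_bounded[OF bounded_clinear_imp_bounded_linear[OF assms(1)]] by blast
  then show ?thesis
    using that[of C] assms(2) by (metis mult.commute)
qed

lemma extension_identity_snd:
  assumes "\<forall>x x'. (T x, x') = E (case F (x, x') of (y, y') \<Rightarrow> (S y, y'))"
    and "F (x, x') = (y, 0)"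
  shows "x' = snd (E (S y, 0))"
proof -
  have "(T x, x') = E (S y, 0)" using assms by simp
  then show ?thesis by (metis snd_conv)
qed

theorem theorem5p3:
  fixes T :: "'x::{complex_normed_vector,banach} \<Rightarrow> 'x"
    and S :: "'y::{complex_normed_vector,banach} \<Rightarrow> 'y"
    and E :: "'y \<times> 'y2::{complex_normed_vector,banach} \<Rightarrow> 'x \<times> 'x2::{complex_normed_vector,banach}"
    and F :: "'x \<times> 'x2 \<Rightarrow> 'y \<times> 'y2"
  assumes "bounded_clinear T" and "bounded_clinear S"
    and "invertible_op E" and "invertible_op F"
    and "\<forall>x x'. (T x, x') = E (case F (x, x') of (y, y') \<Rightarrow> (S y, y'))"
    and "compact_op S"
  shows "\<exists>M :: 'y set. \<exists>N :: 'x set. csubspace M \<and> closed M \<and> finite_codim M \<and>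
           csubspace N \<and> closed N \<and> top_isomorphic M N"
proof -
  obtain G where F: "bounded_clinear F" and G: "bounded_clinear G" "\<And>u. F (G u) = u"
    using assms(4) unfolding invertible_op_def by blast
  define J where "J y = fst (G (y, 0 :: 'y2))" for y
  define K where "K y = snd (G (y, 0 :: 'y2))" for y
  have G0: "bounded_clinear (\<lambda>y. G (y, 0 :: 'y2))"
    by (rule bounded_clinear_compose[OF G(1) bounded_clinear_Pair_zero])
  have J: "bounded_clinear J" unfolding J_def by (rule bounded_clinear_compose[OF bounded_clinear_fst G0])
  have "K y = snd (E (S y, 0))" for y
    using extension_identity_snd[OF assms(5), of "J y" "K y" y] G(2)[of "(y, 0)"] by (simp add: J_def K_def)
  then have K_eq: "K = (\<lambda>y. snd (E (S y, 0)))" ..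
  have "bounded_clinear (\<lambda>u. snd (E (u, 0 :: 'y2)))"
    using assms(3) bounded_clinear_compose[OF bounded_clinear_snd
        bounded_clinear_compose[OF _ bounded_clinear_Pair_zero]]
    unfolding invertible_op_def by blast
  then have K: "compact_op K"
    unfolding K_eq by (rule compact_op_compose_left[OF _ assms(6)])
  obtain C where "C > 0" and C: "\<And>u. norm u \<le> C * norm (G u)"
    using norm_le_norm_right_inverse[OF F G(2)] by blast
  have "norm y \<le> C * (norm (J y) + norm (K y))" for y
  proof -
    have "norm y \<le> C * norm (J y, K y)"
      using C[of "(y, 0)"] by (simp add: J_def K_def norm_Pair)
    also have "\<dots> \<le> C * (norm (J y) + norm (K y))"
      using \<open>C > 0\<close> norm_Pair_le by (simp add: mult_left_mono)
    finally show ?thesis .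
  qed
  then show ?thesis
    by (rule finite_codim_top_isomorphic_if_bounded_below_modulo_compact[OF J K])
qed

end
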